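(* Let $\mathcal D$ be a semicartesian symmetric monoidal category. Then the following are equivalent: (1) $\mathcal D$ can be made into a Markov category (i.e. there exist morphisms $\mathrm{copy}_X\colon X\to X\otimes X$ for all objects $X$ which, together with the unique morphisms $\mathrm{del}_X\colon X\to I$, make $\mathcal D$ a Markov category) in which, for every object $X$, the copy morphism $\mathrm{copy}_X$ is an initial dilation of $\mathrm{id}_X$. (2) For every object $X$, the identity $\mathrm{id}_X$ admits an initial dilation $\iota\colon X\to X\otimes E$ such that the marginal $(\mathrm{del}_X\otimes\mathrm{id}_E)\circ\iota\colon X\to E$ is non-creative. Moreover, if these conditions hold, then the Markov category structure in (1) is unique.
   Context: A symmetric monoidal category $(\mathcal D,\otimes,I)$ is semicartesian if the unit $I$ is terminal; write $\mathrm{del}_X\colon X\to I$ for the unique morphism (unitors suppressed). A Markov category is a symmetric monoidal category in which every object $X$ carries morphisms $\mathrm{copy}_X\colon X\to X\otimes X$ and $\mathrm{del}_X\colon X\to I$ forming a commutative comonoid, compatible with the monoidal structure ($\mathrm{copy}_{X\otimes Y}$ is $\mathrm{copy}_X\otimes\mathrm{copy}_Y$ followed by swapping the middle factors, $\mathrm{del}_{X\otimes Y}=\mathrm{del}_X\otimes\mathrm{del}_Y$), with $I$ terminal. In a semicartesian category: a dilation of $p\colon A\to X$ is a morphism $\pi\colon A\to X\otimes E$ for some object $E$ (the environment) with $(\mathrm{id}_X\otimes\mathrm{del}_E)\circ\pi=p$. Given a dilation $\pi\colon A\to X\otimes E$ of $p$ and morphisms $f_1,f_2\colon E\to E'$,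 say $f_1$ and $f_2$ are $\pi$-dilationally equal if for every dilation $\rho\colon A\to X\otimes E\otimes F$ of $\pi$ one has $(\mathrm{id}_X\otimes f_1\otimes\mathrm{id}_F)\circ\rho=(\mathrm{id}_X\otimes f_2\otimes\mathrm{id}_F)\circ\rho$. A dilation $\pi\colon A\to X\otimes E$ of $p$ is initial if for every dilation $\pi'\colon A\to X\otimes E'$ of $p$ there exists $f\colon E\to E'$ with $(\mathrm{id}_X\otimes f)\circ\pi=\pi'$, and any two such $f$ are $\pi$-dilationally equal. A morphism $p\colon A\to X$ is non-creative if every dilation $\pi\colon A\to X\otimes E$ of $p$ is of the form $\pi=(p\otimes\mathrm{id}_E)\circ\iota$ for some dilation $\iota\colon A\to A\otimes E$ of $\mathrm{id}_A$. *)

theory Defs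
  imports Main
begin

text \<open>Morphisms are elements of type 'm, objects of type 'o; hom-sets are given explicitly.
  cmp g f is the composite "g after f".\<close>

record ('o, 'm) smc =
  obs :: "'o set"
  hom :: "'o \<Rightarrow> 'o \<Rightarrow> 'm set"
  cmp :: "'m \<Rightarrow> 'm \<Rightarrow> 'm"
  idt :: "'o \<Rightarrow> 'm"
  tob :: "'o \<Rightarrow> 'o \<Rightarrow> 'o"
  tmr :: "'m \<Rightarrow> 'm \<Rightarrow> 'm"
  unt :: "'o"
  asc :: "'o \<Rightarrow> 'o \<Rightarrow> 'o \<Rightarrow> 'm"  \<comment> \<open>(X \<otimes> Y) \<otimes> Z \<rightarrow> X \<otimes> (Y \<otimes> Z)\<close>
  lun :: "'o \<Rightarrow> 'm"
  run :: "'o \<Rightarrow> 'm"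
  swp :: "'o \<Rightarrow> 'o \<Rightarrow> 'm"

definition is_iso :: "('o, 'm, 'z) smc_scheme \<Rightarrow> 'o \<Rightarrow> 'o \<Rightarrow> 'm \<Rightarrow> bool" where
  "is_iso C A B f \<longleftrightarrow> f \<in> hom C A B \<and>
     (\<exists>g \<in> hom C B A. cmp C g f = idt C A \<and> cmp C f g = idt C B)"

definition inv_iso :: "('o, 'm, 'z) smc_scheme \<Rightarrow> 'o \<Rightarrow> 'o \<Rightarrow> 'm \<Rightarrow> 'm" where
  "inv_iso C A B f = (THE g. g \<in> hom C B A \<and> cmp C g f = idt C A \<and> cmp C f g = idt C B)"

definition is_category :: "('o, 'm, 'z) smc_scheme \<Rightarrow> bool" where
  "is_category C \<longleftrightarrow>
     (\<forall>A B f. f \<in> hom C A B \<longrightarrow> A \<in> obs C \<and> B \<in> obs C) \<and>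
     (\<forall>A \<in> obs C. idt C A \<in> hom C A A) \<and>
     (\<forall>A B D f g. f \<in> hom C A B \<longrightarrow> g \<in> hom C B D \<longrightarrow> cmp C g f \<in> hom C A D) \<and>
     (\<forall>A B D E f g h. f \<in> hom C A B \<longrightarrow> g \<in> hom C B D \<longrightarrow> h \<in> hom C D E \<longrightarrow>
        cmp C h (cmp C g f) = cmp C (cmp C h g) f) \<and>
     (\<forall>A B f. f \<in> hom C A B \<longrightarrow> cmp C (idt C B) f = f \<and> cmp C f (idt C A) = f)"

definition is_smc :: "('o, 'm, 'z) smc_scheme \<Rightarrow> bool" where
  "is_smc C \<longleftrightarrow> is_category C \<and>
     \<comment> \<open>tensor is a bifunctor\<close>
     unt C \<in> obs C \<and>
     (\<forall>X \<in> obs C. \<forall>Y \<in> obs C. tob C X Y \<in> obs C) \<and>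
     (\<forall>A B A' B' f g. f \<in> hom C A B \<longrightarrow> g \<in> hom C A' B' \<longrightarrow>
        tmr C f g \<in> hom C (tob C A A') (tob C B B')) \<and>
     (\<forall>X \<in> obs C. \<forall>Y \<in> obs C. tmr C (idt C X) (idt C Y) = idt C (tob C X Y)) \<and>
     (\<forall>A B D A' B' D' f g f' g'. f \<in> hom C A B \<longrightarrow> g \<in> hom C B D \<longrightarrow>
        f' \<in> hom C A' B' \<longrightarrow> g' \<in> hom C B' D' \<longrightarrow>
        tmr C (cmp C g f) (cmp C g' f') = cmp C (tmr C g g') (tmr C f f')) \<and>
     \<comment> \<open>structure isomorphisms\<close>
     (\<forall>X \<in> obs C. \<forall>Y \<in> obs C. \<forall>Z \<in> obs C.
        is_iso C (tob C (tob C X Y) Z) (tob C X (tob C Y Z)) (asc C X Y Z)) \<and>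
     (\<forall>X \<in> obs C. is_iso C (tob C (unt C) X) X (lun C X)) \<and>
     (\<forall>X \<in> obs C. is_iso C (tob C X (unt C)) X (run C X)) \<and>
     (\<forall>X \<in> obs C. \<forall>Y \<in> obs C. is_iso C (tob C X Y) (tob C Y X) (swp C X Y)) \<and>
     \<comment> \<open>naturality\<close>
     (\<forall>A A' B B' D D' f g h. f \<in> hom C A A' \<longrightarrow> g \<in> hom C B B' \<longrightarrow> h \<in> hom C D D' \<longrightarrow>
        cmp C (asc C A' B' D') (tmr C (tmr C f g) h) = cmp C (tmr C f (tmr C g h)) (asc C A B D)) \<and>
     (\<forall>A A' f. f \<in> hom C A A' \<longrightarrow>
        cmp C (lun C A') (tmr C (idt C (unt C)) f) = cmp C f (lun C A)) \<and>
     (\<forall>A A' f. f \<in> hom C A A' \<longrightarrow>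
        cmp C (run C A') (tmr C f (idt C (unt C))) = cmp C f (run C A)) \<and>
     (\<forall>A A' B B' f g. f \<in> hom C A A' \<longrightarrow> g \<in> hom C B B' \<longrightarrow>
        cmp C (swp C A' B') (tmr C f g) = cmp C (tmr C g f) (swp C A B)) \<and>
     \<comment> \<open>pentagon\<close>
     (\<forall>W \<in> obs C. \<forall>X \<in> obs C. \<forall>Y \<in> obs C. \<forall>Z \<in> obs C.
        cmp C (asc C W X (tob C Y Z)) (asc C (tob C W X) Y Z) =
        cmp C (tmr C (idt C W) (asc C X Y Z))
          (cmp C (asc C W (tob C X Y) Z) (tmr C (asc C W X Y) (idt C Z)))) \<and>
     \<comment> \<open>triangle\<close>
     (\<forall>X \<in> obs C. \<forall>Y \<in> obs C.
        cmp C (tmr C (idt C X) (lun C Y)) (asc C X (unt C) Y) = tmr C (run C X) (idt C Y)) \<and>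
     \<comment> \<open>hexagon\<close>
     (\<forall>X \<in> obs C. \<forall>Y \<in> obs C. \<forall>Z \<in> obs C.
        cmp C (asc C Y Z X) (cmp C (swp C X (tob C Y Z)) (asc C X Y Z)) =
        cmp C (tmr C (idt C Y) (swp C X Z))
          (cmp C (asc C Y X Z) (tmr C (swp C X Y) (idt C Z)))) \<and>
     \<comment> \<open>symmetry\<close>
     (\<forall>X \<in> obs C. \<forall>Y \<in> obs C. cmp C (swp C Y X) (swp C X Y) = idt C (tob C X Y))"

definition semicartesian :: "('o, 'm, 'z) smc_scheme \<Rightarrow> bool" where
  "semicartesian C \<longleftrightarrow> is_smc C \<and> (\<forall>X \<in> obs C. \<exists>!d. d \<in> hom C X (unt C))"

definition del :: "('o, 'm, 'z) smc_scheme \<Rightarrow> 'o \<Rightarrow> 'm" where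
  "del C X = (THE d. d \<in> hom C X (unt C))"

text \<open>Middle-four interchange (X \<otimes> X) \<otimes> (Y \<otimes> Y) \<rightarrow> (X \<otimes> Y) \<otimes> (X \<otimes> Y).\<close>
definition mid_swap :: "('o, 'm, 'z) smc_scheme \<Rightarrow> 'o \<Rightarrow> 'o \<Rightarrow> 'm" where
  "mid_swap C X Y =
    cmp C (inv_iso C (tob C (tob C X Y) (tob C X Y)) (tob C X (tob C Y (tob C X Y)))
                     (asc C X Y (tob C X Y)))
     (cmp C (tmr C (idt C X)
               (cmp C (asc C Y X Y)
                 (cmp C (tmr C (swp C X Y) (idt C Y))
                    (inv_iso C (tob C (tob C X Y) Y) (tob C X (tob C Y Y)) (asc C X Y Y)))))
        (asc C X X (tob C Y Y)))"

definition markov :: "('o, 'm, 'z) smc_scheme \<Rightarrow> ('o \<Rightarrow> 'm) \<Rightarrow> bool" where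
  "markov C copy \<longleftrightarrow> semicartesian C \<and>
     (\<forall>X \<in> obs C. copy X \<in> hom C X (tob C X X) \<and>
        cmp C (lun C X) (cmp C (tmr C (del C X) (idt C X)) (copy X)) = idt C X \<and>
        cmp C (run C X) (cmp C (tmr C (idt C X) (del C X)) (copy X)) = idt C X \<and>
        cmp C (asc C X X X) (cmp C (tmr C (copy X) (idt C X)) (copy X)) =
          cmp C (tmr C (idt C X) (copy X)) (copy X) \<and>
        cmp C (swp C X X) (copy X) = copy X) \<and>
     (\<forall>X \<in> obs C. \<forall>Y \<in> obs C.
        copy (tob C X Y) = cmp C (mid_swap C X Y) (tmr C (copy X) (copy Y)))"

definition dilation :: "('o, 'm, 'z) smc_scheme \<Rightarrow> 'm \<Rightarrow> 'o \<Rightarrow> 'o \<Rightarrow> 'o \<Rightarrow> 'm \<Rightarrow> bool" where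
  "dilation C p A X E \<pi> \<longleftrightarrow> E \<in> obs C \<and> \<pi> \<in> hom C A (tob C X E) \<and>
     cmp C (run C X) (cmp C (tmr C (idt C X) (del C E)) \<pi>) = p"

definition dil_equal ::
  "('o, 'm, 'z) smc_scheme \<Rightarrow> 'm \<Rightarrow> 'o \<Rightarrow> 'o \<Rightarrow> 'o \<Rightarrow> 'm \<Rightarrow> 'm \<Rightarrow> bool" where
  "dil_equal C \<pi> A X E f1 f2 \<longleftrightarrow>
     (\<forall>F \<rho>. dilation C \<pi> A (tob C X E) F \<rho> \<longrightarrow>
        cmp C (tmr C (tmr C (idt C X) f1) (idt C F)) \<rho> =
        cmp C (tmr C (tmr C (idt C X) f2) (idt C F)) \<rho>)"

definition initial_dilation ::
  "('o, 'm, 'z) smc_scheme \<Rightarrow> 'm \<Rightarrow> 'o \<Rightarrow> 'o \<Rightarrow> 'o \<Rightarrow> 'm \<Rightarrow> bool" where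
  "initial_dilation C p A X E \<pi> \<longleftrightarrow> dilation C p A X E \<pi> \<and>
     (\<forall>E' \<pi>'. dilation C p A X E' \<pi>' \<longrightarrow>
        (\<exists>f \<in> hom C E E'. cmp C (tmr C (idt C X) f) \<pi> = \<pi>') \<and>
        (\<forall>f1 \<in> hom C E E'. \<forall>f2 \<in> hom C E E'.
           cmp C (tmr C (idt C X) f1) \<pi> = \<pi>' \<longrightarrow> cmp C (tmr C (idt C X) f2) \<pi> = \<pi>' \<longrightarrow>
           dil_equal C \<pi> A X E f1 f2))"

definition non_creative :: "('o, 'm, 'z) smc_scheme \<Rightarrow> 'm \<Rightarrow> 'o \<Rightarrow> 'o \<Rightarrow> bool" where
  "non_creative C p A X \<longleftrightarrow>
     (\<forall>E \<pi>. dilation C p A X E \<pi> \<longrightarrow>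
        (\<exists>\<iota>. dilation C (idt C A) A A E \<iota> \<and> \<pi> = cmp C (tmr C p (idt C E)) \<iota>))"

definition marginal :: "('o, 'm, 'z) smc_scheme \<Rightarrow> 'o \<Rightarrow> 'o \<Rightarrow> 'm \<Rightarrow> 'm" where
  "marginal C X E \<iota> = cmp C (lun C E) (cmp C (tmr C (del C X) (idt C E)) \<iota>)"

end

theory Submission
  imports Defs
begin

(* Write \<pi>\<^sub>1, \<pi>\<^sub>2 for the projections X \<odot> Y \<rightarrow> X, Y that delete one factor, and call
   c : X \<rightarrow> X \<odot> X counital if \<pi>\<^sub>1 \<cdot> c = \<pi>\<^sub>2 \<cdot> c = \<one> X; for a dilation c of \<one> X this says
   that its marginal is \<one> X too. An initial dilation c of \<one> X that is counital is the only
   counital map X \<rightarrow> X \<odot> X: initiality writes any other one as (\<one> X \<otimes> f) \<cdot> c, and applying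
   \<pi>\<^sub>2 gives f = \<one> X. This uniqueness forces \<sigma> \<cdot> c = c and compatibility with the tensor
   (mid_swap \<cdot> (c\<^sub>X \<otimes> c\<^sub>Y) is counital), and coassociativity holds because \<pi>\<^sub>2 recovers the
   factorisation of \<alpha> \<cdot> (c \<otimes> \<one> X) \<cdot> c through c as c itself. So (1) says exactly that every X
   has an initial counital c, and then c is unique.

   For (2) \<Rightarrow> (1), let \<iota> : X \<rightarrow> X \<odot> E be an initial dilation of \<one> X with non-creative marginal m.
   Then \<sigma> \<cdot> \<iota> is a dilation of m, so it equals (m \<otimes> \<one> X) \<cdot> \<kappa> for a dilation \<kappa> of \<one> X, and
   c = \<sigma> \<cdot> \<kappa> is counital with \<iota> = (\<one> X \<otimes> m) \<cdot> c. Initiality of \<iota> gives c = (\<one> X \<otimes> f) \<cdot> \<iota>,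
   whence f \<cdot> m = \<one> X: E retracts onto X, and c inherits initiality from \<iota>. Conversely, copy
   itself witnesses (2), its marginal being the identity, which is non-creative. *)

(* A rewrite step reads "by (subst eq) (rule refl hom_rules)+": subst leaves the
   typing side conditions of eq before the rewritten goal, and the rules discharge them by
   recursion on the morphism. No step may leave an object schematic, or tensor_ob recurses forever. *)
named_theorems hom_rules

section \<open>Symmetric monoidal categories\<close>

locale symmetric_monoidal =
  fixes C :: "('o, 'm, 'z) smc_scheme"
  assumes smc: "is_smc C"
begin

abbreviation Ob where "Ob \<equiv> obs C"
abbreviation I where "I \<equiv> unt C"
abbreviation Hom where "Hom A B \<equiv> hom C A B"
abbreviation comp_arr (infixr "\<cdot>" 55) where "g \<cdot> f \<equiv> cmp C g f"
abbreviation tensor_arr (infixr "\<otimes>" 70) where "f \<otimes> g \<equiv> tmr C f g"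
abbreviation tensor_ob (infixr "\<odot>" 75) where "A \<odot> B \<equiv> tob C A B"
abbreviation ident ("\<one>") where "\<one> \<equiv> idt C"
abbreviation \<alpha> where "\<alpha> \<equiv> asc C"
abbreviation \<l> where "\<l> \<equiv> lun C"
abbreviation \<r> where "\<r> \<equiv> run C"
abbreviation \<sigma> where "\<sigma> \<equiv> swp C"

definition \<alpha>' where "\<alpha>' X Y Z = inv_iso C ((X \<odot> Y) \<odot> Z) (X \<odot> (Y \<odot> Z)) (\<alpha> X Y Z)"
definition \<l>' where "\<l>' X = inv_iso C (I \<odot> X) X (\<l> X)"
definition \<r>' where "\<r>' X = inv_iso C (X \<odot> I) X (\<r> X)"

lemma category: "is_category C"
  using smc unfolding is_smc_def by (elim conjE) force

lemma hom_obs: assumes "f \<in> Hom A B" shows "A \<in> Ob" "B \<in> Ob"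
  using assms category unfolding is_category_def by blast+

lemma id_hom [hom_rules]: "A \<in> Ob \<Longrightarrow> \<one> A \<in> Hom A A"
  using category unfolding is_category_def by blast

lemma comp_hom [hom_rules]: "f \<in> Hom A B \<Longrightarrow> g \<in> Hom B D \<Longrightarrow> g \<cdot> f \<in> Hom A D"
  using category unfolding is_category_def by blast

lemma comp_assoc: "f \<in> Hom A B \<Longrightarrow> g \<in> Hom B D \<Longrightarrow> h \<in> Hom D E \<Longrightarrow> (h \<cdot> g) \<cdot> f = h \<cdot> g \<cdot> f"
  using category unfolding is_category_def by metis

lemma id_left: "f \<in> Hom A B \<Longrightarrow> \<one> B \<cdot> f = f"
  using category unfolding is_category_def by blast

lemma id_right: "f \<in> Hom A B \<Longrightarrow> f \<cdot> \<one> A = f"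
  using category unfolding is_category_def by blast

lemma unit_ob [hom_rules]: "I \<in> Ob"
  using smc unfolding is_smc_def by (elim conjE) force

lemma tensor_ob [hom_rules]: "A \<in> Ob \<Longrightarrow> B \<in> Ob \<Longrightarrow> A \<odot> B \<in> Ob"
  using smc unfolding is_smc_def by (elim conjE) force

lemma tensor_hom [hom_rules]: "f \<in> Hom A B \<Longrightarrow> g \<in> Hom A' B' \<Longrightarrow> f \<otimes> g \<in> Hom (A \<odot> A') (B \<odot> B')"
  using smc unfolding is_smc_def by (elim conjE) force

lemma tensor_id: "A \<in> Ob \<Longrightarrow> B \<in> Ob \<Longrightarrow> \<one> A \<otimes> \<one> B = \<one> (A \<odot> B)"
  using smc unfolding is_smc_def by (elim conjE) force

lemma tensor_comp: "f \<in> Hom A B \<Longrightarrow> g \<in> Hom B D \<Longrightarrow> f' \<in> Hom A' B' \<Longrightarrow> g' \<in> Hom B' D' \<Longrightarrow>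
   (g \<otimes> g') \<cdot> (f \<otimes> f') = (g \<cdot> f) \<otimes> (g' \<cdot> f')"
  using smc unfolding is_smc_def by (elim conjE) (rule sym, blast)

lemma assoc_iso: "X \<in> Ob \<Longrightarrow> Y \<in> Ob \<Longrightarrow> Z \<in> Ob \<Longrightarrow> is_iso C ((X \<odot> Y) \<odot> Z) (X \<odot> (Y \<odot> Z)) (\<alpha> X Y Z)"
  using smc unfolding is_smc_def by (elim conjE) force

lemma lunit_iso: "X \<in> Ob \<Longrightarrow> is_iso C (I \<odot> X) X (\<l> X)"
  using smc unfolding is_smc_def by (elim conjE) force

lemma runit_iso: "X \<in> Ob \<Longrightarrow> is_iso C (X \<odot> I) X (\<r> X)"
  using smc unfolding is_smc_def by (elim conjE) force

lemma swap_hom [hom_rules]: "X \<in> Ob \<Longrightarrow> Y \<in> Ob \<Longrightarrow> \<sigma> X Y \<in> Hom (X \<odot> Y) (Y \<odot> X)"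
  using smc unfolding is_smc_def is_iso_def by (elim conjE) force

lemma assoc_natural: "f \<in> Hom A A' \<Longrightarrow> g \<in> Hom B B' \<Longrightarrow> h \<in> Hom D D' \<Longrightarrow>
  \<alpha> A' B' D' \<cdot> ((f \<otimes> g) \<otimes> h) = (f \<otimes> (g \<otimes> h)) \<cdot> \<alpha> A B D"
  using smc unfolding is_smc_def by (elim conjE) force

lemma lunit_natural: "f \<in> Hom A A' \<Longrightarrow> \<l> A' \<cdot> (\<one> I \<otimes> f) = f \<cdot> \<l> A"
  using smc unfolding is_smc_def by (elim conjE) force

lemma runit_natural: "f \<in> Hom A A' \<Longrightarrow> \<r> A' \<cdot> (f \<otimes> \<one> I) = f \<cdot> \<r> A"
  using smc unfolding is_smc_def by (elim conjE) force

lemma swap_natural: "f \<in> Hom A A' \<Longrightarrow> g \<in> Hom B B' \<Longrightarrow> \<sigma> A' B' \<cdot> (f \<otimes> g) = (g \<otimes> f) \<cdot> \<sigma> A B"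
  using smc unfolding is_smc_def by (elim conjE) force

lemma pentagon: "W \<in> Ob \<Longrightarrow> X \<in> Ob \<Longrightarrow> Y \<in> Ob \<Longrightarrow> Z \<in> Ob \<Longrightarrow>
  \<alpha> W X (Y \<odot> Z) \<cdot> \<alpha> (W \<odot> X) Y Z = (\<one> W \<otimes> \<alpha> X Y Z) \<cdot> \<alpha> W (X \<odot> Y) Z \<cdot> (\<alpha> W X Y \<otimes> \<one> Z)"
  using smc unfolding is_smc_def by (elim conjE) force

lemma triangle: "X \<in> Ob \<Longrightarrow> Y \<in> Ob \<Longrightarrow> (\<one> X \<otimes> \<l> Y) \<cdot> \<alpha> X I Y = \<r> X \<otimes> \<one> Y"
  using smc unfolding is_smc_def by (elim conjE) force

lemma hexagon: "X \<in> Ob \<Longrightarrow> Y \<in> Ob \<Longrightarrow> Z \<in> Ob \<Longrightarrow>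
  \<alpha> Y Z X \<cdot> \<sigma> X (Y \<odot> Z) \<cdot> \<alpha> X Y Z = (\<one> Y \<otimes> \<sigma> X Z) \<cdot> \<alpha> Y X Z \<cdot> (\<sigma> X Y \<otimes> \<one> Z)"
  using smc unfolding is_smc_def by (elim conjE) force

lemma swap_swap: "X \<in> Ob \<Longrightarrow> Y \<in> Ob \<Longrightarrow> \<sigma> Y X \<cdot> \<sigma> X Y = \<one> (X \<odot> Y)"
  using smc unfolding is_smc_def by (elim conjE) force

lemma inv_iso: assumes "is_iso C A B f"
  shows "inv_iso C A B f \<in> Hom B A" "inv_iso C A B f \<cdot> f = \<one> A" "f \<cdot> inv_iso C A B f = \<one> B"
proof -
  obtain g where g: "g \<in> Hom B A" "g \<cdot> f = \<one> A" "f \<cdot> g = \<one> B"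
    using assms unfolding is_iso_def by blast
  have f: "f \<in> Hom A B" using assms unfolding is_iso_def by blast
  have "inv_iso C A B f = g"
    unfolding inv_iso_def
  proof (rule the_equality)
    show "g \<in> Hom B A \<and> g \<cdot> f = \<one> A \<and> f \<cdot> g = \<one> B" using g by blast
    fix g' assume "g' \<in> Hom B A \<and> g' \<cdot> f = \<one> A \<and> f \<cdot> g' = \<one> B"
    then have g': "g' \<in> Hom B A" "g' \<cdot> f = \<one> A" by simp_all
    have "g' = g' \<cdot> f \<cdot> g" using id_right[OF g'(1)] g(3) by simp
    also have "\<dots> = (g' \<cdot> f) \<cdot> g" using comp_assoc[OF g(1) f g'(1)] by simp
    also have "\<dots> = g" using id_left[OF g(1)] g'(2) by simp
    finally show "g' = g" .
  qed
  with g show "inv_iso C A B f \<in> Hom B A" "inv_iso C A B f \<cdot> f = \<one> A" "f \<cdot> inv_iso C A B f = \<one> B"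
    by simp_all
qed

lemma assoc_hom [hom_rules]: "X \<in> Ob \<Longrightarrow> Y \<in> Ob \<Longrightarrow> Z \<in> Ob \<Longrightarrow> \<alpha> X Y Z \<in> Hom ((X \<odot> Y) \<odot> Z) (X \<odot> (Y \<odot> Z))"
  using assoc_iso unfolding is_iso_def by blast

lemma lunit_hom [hom_rules]: "X \<in> Ob \<Longrightarrow> \<l> X \<in> Hom (I \<odot> X) X"
  using lunit_iso unfolding is_iso_def by blast

lemma runit_hom [hom_rules]: "X \<in> Ob \<Longrightarrow> \<r> X \<in> Hom (X \<odot> I) X"
  using runit_iso unfolding is_iso_def by blast

lemma assoc_inv_hom [hom_rules]: "X \<in> Ob \<Longrightarrow> Y \<in> Ob \<Longrightarrow> Z \<in> Ob \<Longrightarrow> \<alpha>' X Y Z \<in> Hom (X \<odot> (Y \<odot> Z)) ((X \<odot> Y) \<odot> Z)"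
  unfolding \<alpha>'_def using inv_iso[OF assoc_iso] by blast

lemma lunit_inv_hom [hom_rules]: "X \<in> Ob \<Longrightarrow> \<l>' X \<in> Hom X (I \<odot> X)"
  unfolding \<l>'_def using inv_iso[OF lunit_iso] by blast

lemma runit_inv_hom [hom_rules]: "X \<in> Ob \<Longrightarrow> \<r>' X \<in> Hom X (X \<odot> I)"
  unfolding \<r>'_def using inv_iso[OF runit_iso] by blast

lemma assoc_inv_assoc: "X \<in> Ob \<Longrightarrow> Y \<in> Ob \<Longrightarrow> Z \<in> Ob \<Longrightarrow> \<alpha>' X Y Z \<cdot> \<alpha> X Y Z = \<one> ((X \<odot> Y) \<odot> Z)"
  unfolding \<alpha>'_def using inv_iso[OF assoc_iso] by blast

lemma assoc_assoc_inv: "X \<in> Ob \<Longrightarrow> Y \<in> Ob \<Longrightarrow> Z \<in> Ob \<Longrightarrow> \<alpha> X Y Z \<cdot> \<alpha>' X Y Z = \<one> (X \<odot> (Y \<odot> Z))"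
  unfolding \<alpha>'_def using inv_iso[OF assoc_iso] by blast

lemma lunit_lunit_inv: "X \<in> Ob \<Longrightarrow> \<l> X \<cdot> \<l>' X = \<one> X"
  unfolding \<l>'_def using inv_iso[OF lunit_iso] by blast

lemma runit_runit_inv: "X \<in> Ob \<Longrightarrow> \<r> X \<cdot> \<r>' X = \<one> X"
  unfolding \<r>'_def using inv_iso[OF runit_iso] by blast

lemma comp_eq_precomp:
  "a \<cdot> b = x \<Longrightarrow> b \<in> Hom A B \<Longrightarrow> a \<in> Hom B D \<Longrightarrow> r \<in> Hom Z A \<Longrightarrow> a \<cdot> b \<cdot> r = x \<cdot> r"
  using comp_assoc[of r Z A b B a D] by simp

lemma eq_comp_precomp:
  "a = c \<cdot> d \<Longrightarrow> d \<in> Hom A B \<Longrightarrow> c \<in> Hom B D \<Longrightarrow> r \<in> Hom Z A \<Longrightarrow> a \<cdot> r = c \<cdot> d \<cdot> r"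
  using comp_assoc[of r Z A d B c D] by simp

lemma comp_eq_comp_precomp:
  "a \<cdot> b = c \<cdot> d \<Longrightarrow> b \<in> Hom A B \<Longrightarrow> a \<in> Hom B D \<Longrightarrow> d \<in> Hom A B' \<Longrightarrow> c \<in> Hom B' D \<Longrightarrow>
   r \<in> Hom Z A \<Longrightarrow> a \<cdot> b \<cdot> r = c \<cdot> d \<cdot> r"
  using comp_assoc[of r Z A b B a D] comp_assoc[of r Z A d B' c D] by simp

lemma tensor_comp_precomp:
  "f \<in> Hom A B \<Longrightarrow> g \<in> Hom B D \<Longrightarrow> f' \<in> Hom A' B' \<Longrightarrow> g' \<in> Hom B' D' \<Longrightarrow> r \<in> Hom Z (A \<odot> A') \<Longrightarrow>
   (g \<otimes> g') \<cdot> (f \<otimes> f') \<cdot> r = ((g \<cdot> f) \<otimes> (g' \<cdot> f')) \<cdot> r"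
  by (rule comp_eq_precomp[OF tensor_comp]) (assumption | rule hom_rules)+

lemma id_tensor_comp: "f \<in> Hom A B \<Longrightarrow> g \<in> Hom B D \<Longrightarrow> X \<in> Ob \<Longrightarrow> \<one> X \<otimes> (g \<cdot> f) = (\<one> X \<otimes> g) \<cdot> (\<one> X \<otimes> f)"
  using tensor_comp[of "\<one> X" X X "\<one> X" X f A B g D] id_hom id_left[OF id_hom] by auto

lemma cancel_split_epi:
  assumes x: "x \<in> Hom B D" and y: "y \<in> Hom B D" and h: "h \<in> Hom A B" "h' \<in> Hom B A"
    and split: "h \<cdot> h' = \<one> B" and eq: "x \<cdot> h = y \<cdot> h"
  shows "x = y"
proof -
  have "x = (x \<cdot> h) \<cdot> h'" using comp_assoc[OF h(2) h(1) x] split id_right[OF x] by simp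
  also have "\<dots> = (y \<cdot> h) \<cdot> h'" using eq by simp
  also have "\<dots> = y" using comp_assoc[OF h(2) h(1) y] split id_right[OF y] by simp
  finally show ?thesis .
qed

lemma cancel_split_mono:
  assumes x: "x \<in> Hom A B" and y: "y \<in> Hom A B" and h: "h \<in> Hom B D" "h' \<in> Hom D B"
    and split: "h' \<cdot> h = \<one> B" and eq: "h \<cdot> x = h \<cdot> y"
  shows "x = y"
proof -
  have "x = h' \<cdot> h \<cdot> x" using comp_assoc[OF x h] split id_left[OF x] by simp
  also have "\<dots> = h' \<cdot> h \<cdot> y" using eq by simp
  also have "\<dots> = y" using comp_assoc[OF y h] split id_left[OF y] by simp
  finally show ?thesis .
qed

lemma lunit_conj: assumes h: "h \<in> Hom M N" shows "h = \<l> N \<cdot> (\<one> I \<otimes> h) \<cdot> \<l>' M"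
proof -
  have M: "M \<in> Ob" and N: "N \<in> Ob" using hom_obs h by auto
  have "\<l> N \<cdot> (\<one> I \<otimes> h) \<cdot> \<l>' M = (h \<cdot> \<l> M) \<cdot> \<l>' M"
    using lunit_natural[OF h] comp_assoc[OF lunit_inv_hom[OF M] tensor_hom[OF id_hom[OF unit_ob] h] lunit_hom[OF N]]
    by simp
  also have "\<dots> = h"
    using comp_assoc[OF lunit_inv_hom[OF M] lunit_hom[OF M] h] lunit_lunit_inv[OF M] id_right[OF h] by simp
  finally show ?thesis by simp
qed

lemma runit_conj: assumes h: "h \<in> Hom M N" shows "h = \<r> N \<cdot> (h \<otimes> \<one> I) \<cdot> \<r>' M"
proof -
  have M: "M \<in> Ob" and N: "N \<in> Ob" using hom_obs h by auto
  have "\<r> N \<cdot> (h \<otimes> \<one> I) \<cdot> \<r>' M = (h \<cdot> \<r> M) \<cdot> \<r>' M"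
    using runit_natural[OF h] comp_assoc[OF runit_inv_hom[OF M] tensor_hom[OF h id_hom[OF unit_ob]] runit_hom[OF N]]
    by simp
  also have "\<dots> = h"
    using comp_assoc[OF runit_inv_hom[OF M] runit_hom[OF M] h] runit_runit_inv[OF M] id_right[OF h] by simp
  finally show ?thesis by simp
qed

lemma unit_tensor_faithful: "f \<in> Hom M N \<Longrightarrow> g \<in> Hom M N \<Longrightarrow> \<one> I \<otimes> f = \<one> I \<otimes> g \<Longrightarrow> f = g"
  by (metis lunit_conj)

lemma tensor_unit_faithful: "f \<in> Hom M N \<Longrightarrow> g \<in> Hom M N \<Longrightarrow> f \<otimes> \<one> I = g \<otimes> \<one> I \<Longrightarrow> f = g"
  by (metis runit_conj)

(* Kelly's argument: both sides equal \<alpha> I A B \<cdot> ((\<r> I \<otimes> \<one> A) \<otimes> \<one> B), by the pentagon and by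
   the triangle respectively. *)
lemma lunit_tensor_whiskered:
  assumes A [hom_rules]: "A \<in> Ob" and B [hom_rules]: "B \<in> Ob"
  shows "(\<one> I \<otimes> (\<l> (A \<odot> B) \<cdot> \<alpha> I A B)) \<cdot> \<alpha> I (I \<odot> A) B \<cdot> (\<alpha> I I A \<otimes> \<one> B) =
    (\<one> I \<otimes> (\<l> A \<otimes> \<one> B)) \<cdot> \<alpha> I (I \<odot> A) B \<cdot> (\<alpha> I I A \<otimes> \<one> B)"
proof -
  have "(\<one> I \<otimes> (\<l> (A \<odot> B) \<cdot> \<alpha> I A B)) \<cdot> \<alpha> I (I \<odot> A) B \<cdot> (\<alpha> I I A \<otimes> \<one> B) =
      (\<one> I \<otimes> \<l> (A \<odot> B)) \<cdot> (\<one> I \<otimes> \<alpha> I A B) \<cdot> \<alpha> I (I \<odot> A) B \<cdot> (\<alpha> I I A \<otimes> \<one> B)"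
    by (subst eq_comp_precomp[OF id_tensor_comp]) (rule refl hom_rules)+
  also have "\<dots> = (\<one> I \<otimes> \<l> (A \<odot> B)) \<cdot> \<alpha> I I (A \<odot> B) \<cdot> \<alpha> (I \<odot> I) A B"
    by (subst pentagon[symmetric]) (rule refl hom_rules)+
  also have "\<dots> = (\<r> I \<otimes> (\<one> A \<otimes> \<one> B)) \<cdot> \<alpha> (I \<odot> I) A B"
    unfolding tensor_id[OF A B] by (subst comp_eq_precomp[OF triangle]) (rule refl hom_rules)+
  also have "\<dots> = \<alpha> I A B \<cdot> ((\<r> I \<otimes> \<one> A) \<otimes> \<one> B)"
    by (subst assoc_natural[symmetric]) (rule refl hom_rules)+
  also have "\<dots> = \<alpha> I A B \<cdot> (((\<one> I \<otimes> \<l> A) \<cdot> \<alpha> I I A) \<otimes> (\<one> B \<cdot> \<one> B))"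
    using triangle[OF unit_ob A] id_left[OF id_hom[OF B]] by simp
  also have "\<dots> = \<alpha> I A B \<cdot> ((\<one> I \<otimes> \<l> A) \<otimes> \<one> B) \<cdot> (\<alpha> I I A \<otimes> \<one> B)"
    by (subst tensor_comp) (rule refl hom_rules)+
  also have "\<dots> = (\<one> I \<otimes> (\<l> A \<otimes> \<one> B)) \<cdot> \<alpha> I (I \<odot> A) B \<cdot> (\<alpha> I I A \<otimes> \<one> B)"
    by (subst comp_eq_comp_precomp[OF assoc_natural[symmetric]]) (rule refl hom_rules)+
  finally show ?thesis .
qed

lemma lunit_tensor:
  assumes A [hom_rules]: "A \<in> Ob" and B [hom_rules]: "B \<in> Ob"
  shows "\<l> (A \<odot> B) \<cdot> \<alpha> I A B = \<l> A \<otimes> \<one> B"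
proof -
  note I = unit_ob
  have split: "(\<alpha> I I A \<otimes> \<one> B) \<cdot> (\<alpha>' I I A \<otimes> \<one> B) = \<one> ((I \<odot> (I \<odot> A)) \<odot> B)"
    by (subst tensor_comp, (rule hom_rules)+)
      (simp add: assoc_assoc_inv[OF I I A] id_left[OF id_hom[OF B]] tensor_id[OF tensor_ob[OF I tensor_ob[OF I A]] B])
  have "((\<one> I \<otimes> (\<l> (A \<odot> B) \<cdot> \<alpha> I A B)) \<cdot> \<alpha> I (I \<odot> A) B) \<cdot> (\<alpha> I I A \<otimes> \<one> B) =
      ((\<one> I \<otimes> (\<l> A \<otimes> \<one> B)) \<cdot> \<alpha> I (I \<odot> A) B) \<cdot> (\<alpha> I I A \<otimes> \<one> B)"
    by (subst (1 2) comp_assoc, (rule hom_rules)+) (rule lunit_tensor_whiskered[OF A B])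
  then have "(\<one> I \<otimes> (\<l> (A \<odot> B) \<cdot> \<alpha> I A B)) \<cdot> \<alpha> I (I \<odot> A) B = (\<one> I \<otimes> (\<l> A \<otimes> \<one> B)) \<cdot> \<alpha> I (I \<odot> A) B"
    by (rule cancel_split_epi[OF _ _ _ _ split, rotated 4]) (rule hom_rules)+
  then have "\<one> I \<otimes> (\<l> (A \<odot> B) \<cdot> \<alpha> I A B) = \<one> I \<otimes> (\<l> A \<otimes> \<one> B)"
    by (rule cancel_split_epi[OF _ _ _ _ assoc_assoc_inv[OF I tensor_ob[OF I A] B], rotated 4]) (rule hom_rules)+
  then show ?thesis by (rule unit_tensor_faithful[rotated 2]) (rule hom_rules)+
qed

lemma runit_tensor:
  assumes A [hom_rules]: "A \<in> Ob" and B [hom_rules]: "B \<in> Ob"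
  shows "\<r> (A \<odot> B) = (\<one> A \<otimes> \<r> B) \<cdot> \<alpha> A B I"
proof -
  note I = unit_ob
  have "\<alpha> A B I \<cdot> (\<r> (A \<odot> B) \<otimes> \<one> I) = (\<one> A \<otimes> (\<one> B \<otimes> \<l> I)) \<cdot> \<alpha> A B (I \<odot> I) \<cdot> \<alpha> (A \<odot> B) I I"
    unfolding tensor_id[OF A B, symmetric] triangle[OF tensor_ob[OF A B] I, symmetric]
    by (subst comp_eq_comp_precomp[OF assoc_natural[symmetric]]) (rule refl hom_rules)+
  also have "\<dots> = ((\<one> A \<cdot> \<one> A) \<otimes> ((\<one> B \<otimes> \<l> I) \<cdot> \<alpha> B I I)) \<cdot> \<alpha> A (B \<odot> I) I \<cdot> (\<alpha> A B I \<otimes> \<one> I)"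
    by (subst pentagon, (rule hom_rules)+) (rule tensor_comp_precomp; (rule hom_rules)+)
  also have "\<dots> = (\<one> A \<otimes> (\<r> B \<otimes> \<one> I)) \<cdot> \<alpha> A (B \<odot> I) I \<cdot> (\<alpha> A B I \<otimes> \<one> I)"
    using triangle[OF B I] id_left[OF id_hom[OF A]] by simp
  also have "\<dots> = \<alpha> A B I \<cdot> (((\<one> A \<otimes> \<r> B) \<cdot> \<alpha> A B I) \<otimes> (\<one> I \<cdot> \<one> I))"
    by (subst comp_eq_comp_precomp[OF assoc_natural[symmetric]], (rule hom_rules)+, subst tensor_comp)
      (rule refl hom_rules)+
  finally have eq: "\<alpha> A B I \<cdot> (\<r> (A \<odot> B) \<otimes> \<one> I) = \<alpha> A B I \<cdot> (((\<one> A \<otimes> \<r> B) \<cdot> \<alpha> A B I) \<otimes> \<one> I)"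
    using id_left[OF id_hom[OF I]] by simp
  have "\<r> (A \<odot> B) \<otimes> \<one> I = ((\<one> A \<otimes> \<r> B) \<cdot> \<alpha> A B I) \<otimes> \<one> I"
    by (rule cancel_split_mono[OF _ _ assoc_hom[OF A B I] assoc_inv_hom[OF A B I] assoc_inv_assoc[OF A B I] eq])
      (rule hom_rules)+
  then show ?thesis by (rule tensor_unit_faithful[rotated 2]) (rule hom_rules)+
qed

lemma lunit_swap: assumes A [hom_rules]: "A \<in> Ob" shows "\<l> A \<cdot> \<sigma> A I = \<r> A"
proof -
  note I = unit_ob
  have "\<sigma> A I \<cdot> (\<r> A \<otimes> \<one> I) = \<l> (I \<odot> A) \<cdot> \<alpha> I I A \<cdot> \<sigma> A (I \<odot> I) \<cdot> \<alpha> A I I"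
    unfolding triangle[OF A I, symmetric]
    by (subst comp_eq_precomp[OF lunit_tensor], (rule hom_rules)+)
      (subst comp_eq_comp_precomp[OF swap_natural[symmetric]], (rule refl hom_rules)+)
  also have "\<dots> = \<l> (I \<odot> A) \<cdot> (\<one> I \<otimes> \<sigma> A I) \<cdot> \<alpha> I A I \<cdot> (\<sigma> A I \<otimes> \<one> I)"
    using hexagon[OF A I I] by simp
  also have "\<dots> = \<sigma> A I \<cdot> ((\<l> A \<cdot> \<sigma> A I) \<otimes> (\<one> I \<cdot> \<one> I))"
    by (subst comp_eq_comp_precomp[OF lunit_natural], (rule hom_rules)+)
      (subst comp_eq_precomp[OF lunit_tensor], (rule hom_rules)+, subst tensor_comp, (rule refl hom_rules)+)
  finally have eq: "\<sigma> A I \<cdot> (\<r> A \<otimes> \<one> I) = \<sigma> A I \<cdot> ((\<l> A \<cdot> \<sigma> A I) \<otimes> \<one> I)"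
    using id_left[OF id_hom[OF I]] by simp
  have "\<r> A \<otimes> \<one> I = (\<l> A \<cdot> \<sigma> A I) \<otimes> \<one> I"
    by (rule cancel_split_mono[OF _ _ swap_hom[OF A I] swap_hom[OF I A] swap_swap[OF A I] eq]) (rule hom_rules)+
  then show ?thesis by (rule tensor_unit_faithful[rotated 2, symmetric]) (rule hom_rules)+
qed

lemma runit_swap: assumes A [hom_rules]: "A \<in> Ob" shows "\<r> A \<cdot> \<sigma> I A = \<l> A"
proof -
  have "\<l> A = \<l> A \<cdot> \<sigma> A I \<cdot> \<sigma> I A" using id_right[OF lunit_hom[OF A]] swap_swap[OF unit_ob A] by simp
  also have "\<dots> = (\<l> A \<cdot> \<sigma> A I) \<cdot> \<sigma> I A" by (subst comp_assoc) (rule refl hom_rules)+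
  finally show ?thesis using lunit_swap[OF A] by simp
qed

lemma comp_assoc_inv:
  assumes x: "x \<in> Hom (A \<odot> (B \<odot> D)) Y" and [hom_rules]: "A \<in> Ob" "B \<in> Ob" "D \<in> Ob"
    and eq: "x \<cdot> \<alpha> A B D = y"
  shows "y \<cdot> \<alpha>' A B D = x"
proof -
  have "y \<cdot> \<alpha>' A B D = x \<cdot> \<alpha> A B D \<cdot> \<alpha>' A B D"
    unfolding eq[symmetric] by (subst comp_assoc) (rule refl x hom_rules)+
  then show ?thesis using assoc_assoc_inv id_right[OF x] by (simp add: hom_rules)
qed

end

section \<open>Projections in semicartesian categories\<close>

locale semicartesian_cat =
  fixes C :: "('o, 'm, 'z) smc_scheme"
  assumes semicartesian: "semicartesian C"

sublocale semicartesian_cat \<subseteq> symmetric_monoidal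
  using semicartesian unfolding semicartesian_def by unfold_locales blast

context semicartesian_cat
begin

abbreviation \<epsilon> where "\<epsilon> \<equiv> del C"

lemma unit_terminal: "X \<in> Ob \<Longrightarrow> \<exists>!d. d \<in> Hom X I"
  using semicartesian unfolding semicartesian_def by blast

lemma del_hom [hom_rules]: "X \<in> Ob \<Longrightarrow> \<epsilon> X \<in> Hom X I"
  unfolding del_def by (rule theI') (rule unit_terminal)

lemma del_unique: assumes "d \<in> Hom X I" shows "d = \<epsilon> X"
  using unit_terminal[OF hom_obs(1)[OF assms]] del_hom[OF hom_obs(1)[OF assms]] assms by blast

lemma del_comp: "g \<in> Hom A B \<Longrightarrow> \<epsilon> B \<cdot> g = \<epsilon> A"
  by (rule del_unique) (meson comp_hom del_hom hom_obs)

definition \<pi>\<^sub>1 where "\<pi>\<^sub>1 A B = \<r> A \<cdot> (\<one> A \<otimes> \<epsilon> B)"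
definition \<pi>\<^sub>2 where "\<pi>\<^sub>2 A B = \<l> B \<cdot> (\<epsilon> A \<otimes> \<one> B)"

lemma proj1_hom [hom_rules]: "A \<in> Ob \<Longrightarrow> B \<in> Ob \<Longrightarrow> \<pi>\<^sub>1 A B \<in> Hom (A \<odot> B) A"
  unfolding \<pi>\<^sub>1_def by (rule hom_rules | assumption)+

lemma proj2_hom [hom_rules]: "A \<in> Ob \<Longrightarrow> B \<in> Ob \<Longrightarrow> \<pi>\<^sub>2 A B \<in> Hom (A \<odot> B) B"
  unfolding \<pi>\<^sub>2_def by (rule hom_rules | assumption)+

lemma proj1_comp: "A \<in> Ob \<Longrightarrow> B \<in> Ob \<Longrightarrow> r \<in> Hom Z (A \<odot> B) \<Longrightarrow> \<r> A \<cdot> (\<one> A \<otimes> \<epsilon> B) \<cdot> r = \<pi>\<^sub>1 A B \<cdot> r"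
  unfolding \<pi>\<^sub>1_def by (subst comp_assoc) (rule refl hom_rules | assumption)+

lemma proj2_comp: "A \<in> Ob \<Longrightarrow> B \<in> Ob \<Longrightarrow> r \<in> Hom Z (A \<odot> B) \<Longrightarrow> \<l> B \<cdot> (\<epsilon> A \<otimes> \<one> B) \<cdot> r = \<pi>\<^sub>2 A B \<cdot> r"
  unfolding \<pi>\<^sub>2_def by (subst comp_assoc) (rule refl hom_rules | assumption)+

lemma proj1_natural:
  assumes f [hom_rules]: "f \<in> Hom A A'" and g [hom_rules]: "g \<in> Hom B B'"
  shows "\<pi>\<^sub>1 A' B' \<cdot> (f \<otimes> g) = f \<cdot> \<pi>\<^sub>1 A B"
proof -
  have obs [hom_rules]: "A \<in> Ob" "A' \<in> Ob" "B \<in> Ob" "B' \<in> Ob" using hom_obs f g by auto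
  have "\<pi>\<^sub>1 A' B' \<cdot> (f \<otimes> g) = \<r> A' \<cdot> (\<one> A' \<otimes> \<epsilon> B') \<cdot> (f \<otimes> g)"
    unfolding \<pi>\<^sub>1_def by (subst comp_assoc) (rule refl hom_rules)+
  also have "\<dots> = \<r> A' \<cdot> ((\<one> A' \<cdot> f) \<otimes> (\<epsilon> B' \<cdot> g))"
    by (subst tensor_comp) (rule refl hom_rules)+
  also have "\<dots> = \<r> A' \<cdot> ((f \<cdot> \<one> A) \<otimes> (\<one> I \<cdot> \<epsilon> B))"
    using id_left[OF f] id_right[OF f] del_comp[OF g] id_left[OF del_hom[OF obs(3)]] by simp
  also have "\<dots> = \<r> A' \<cdot> (f \<otimes> \<one> I) \<cdot> (\<one> A \<otimes> \<epsilon> B)"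
    by (subst tensor_comp) (rule refl hom_rules)+
  also have "\<dots> = f \<cdot> \<pi>\<^sub>1 A B"
    unfolding \<pi>\<^sub>1_def by (subst comp_eq_comp_precomp[OF runit_natural]) (rule refl hom_rules)+
  finally show ?thesis .
qed

lemma proj2_natural:
  assumes f [hom_rules]: "f \<in> Hom A A'" and g [hom_rules]: "g \<in> Hom B B'"
  shows "\<pi>\<^sub>2 A' B' \<cdot> (f \<otimes> g) = g \<cdot> \<pi>\<^sub>2 A B"
proof -
  have obs [hom_rules]: "A \<in> Ob" "A' \<in> Ob" "B \<in> Ob" "B' \<in> Ob" using hom_obs f g by auto
  have "\<pi>\<^sub>2 A' B' \<cdot> (f \<otimes> g) = \<l> B' \<cdot> (\<epsilon> A' \<otimes> \<one> B') \<cdot> (f \<otimes> g)"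
    unfolding \<pi>\<^sub>2_def by (subst comp_assoc) (rule refl hom_rules)+
  also have "\<dots> = \<l> B' \<cdot> ((\<epsilon> A' \<cdot> f) \<otimes> (\<one> B' \<cdot> g))"
    by (subst tensor_comp) (rule refl hom_rules)+
  also have "\<dots> = \<l> B' \<cdot> ((\<one> I \<cdot> \<epsilon> A) \<otimes> (g \<cdot> \<one> B))"
    using id_left[OF g] id_right[OF g] del_comp[OF f] id_left[OF del_hom[OF obs(1)]] by simp
  also have "\<dots> = \<l> B' \<cdot> (\<one> I \<otimes> g) \<cdot> (\<epsilon> A \<otimes> \<one> B)"
    by (subst tensor_comp) (rule refl hom_rules)+
  also have "\<dots> = g \<cdot> \<pi>\<^sub>2 A B"
    unfolding \<pi>\<^sub>2_def by (subst comp_eq_comp_precomp[OF lunit_natural]) (rule refl hom_rules)+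
  finally show ?thesis .
qed

lemma proj1_swap:
  assumes [hom_rules]: "A \<in> Ob" "B \<in> Ob"
  shows "\<pi>\<^sub>1 B A \<cdot> \<sigma> A B = \<pi>\<^sub>2 A B"
proof -
  have "\<pi>\<^sub>1 B A \<cdot> \<sigma> A B = \<r> B \<cdot> (\<one> B \<otimes> \<epsilon> A) \<cdot> \<sigma> A B"
    unfolding \<pi>\<^sub>1_def by (subst comp_assoc) (rule refl hom_rules)+
  also have "\<dots> = \<r> B \<cdot> \<sigma> I B \<cdot> (\<epsilon> A \<otimes> \<one> B)"
    by (subst swap_natural[symmetric]) (rule refl hom_rules)+
  also have "\<dots> = \<pi>\<^sub>2 A B"
    unfolding \<pi>\<^sub>2_def by (subst comp_eq_precomp[OF runit_swap]) (rule refl hom_rules)+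
  finally show ?thesis .
qed

lemma proj2_swap:
  assumes [hom_rules]: "A \<in> Ob" "B \<in> Ob"
  shows "\<pi>\<^sub>2 B A \<cdot> \<sigma> A B = \<pi>\<^sub>1 A B"
proof -
  have "\<pi>\<^sub>2 B A \<cdot> \<sigma> A B = \<l> A \<cdot> (\<epsilon> B \<otimes> \<one> A) \<cdot> \<sigma> A B"
    unfolding \<pi>\<^sub>2_def by (subst comp_assoc) (rule refl hom_rules)+
  also have "\<dots> = \<l> A \<cdot> \<sigma> A I \<cdot> (\<one> A \<otimes> \<epsilon> B)"
    by (subst swap_natural[symmetric]) (rule refl hom_rules)+
  also have "\<dots> = \<pi>\<^sub>1 A B"
    unfolding \<pi>\<^sub>1_def by (subst comp_eq_precomp[OF lunit_swap]) (rule refl hom_rules)+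
  finally show ?thesis .
qed

lemma id_tensor_proj1_assoc:
  assumes A [hom_rules]: "A \<in> Ob" and B [hom_rules]: "B \<in> Ob" and D [hom_rules]: "D \<in> Ob"
  shows "(\<one> A \<otimes> \<pi>\<^sub>1 B D) \<cdot> \<alpha> A B D = \<pi>\<^sub>1 (A \<odot> B) D"
proof -
  have "(\<one> A \<otimes> \<pi>\<^sub>1 B D) \<cdot> \<alpha> A B D = (\<one> A \<otimes> \<r> B) \<cdot> (\<one> A \<otimes> (\<one> B \<otimes> \<epsilon> D)) \<cdot> \<alpha> A B D"
    unfolding \<pi>\<^sub>1_def by (subst eq_comp_precomp[OF id_tensor_comp]) (rule refl hom_rules)+
  also have "\<dots> = (\<one> A \<otimes> \<r> B) \<cdot> \<alpha> A B I \<cdot> ((\<one> A \<otimes> \<one> B) \<otimes> \<epsilon> D)"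
    by (subst assoc_natural[symmetric]) (rule refl hom_rules)+
  also have "\<dots> = ((\<one> A \<otimes> \<r> B) \<cdot> \<alpha> A B I) \<cdot> (\<one> (A \<odot> B) \<otimes> \<epsilon> D)"
    unfolding tensor_id[OF A B] by (subst comp_assoc) (rule refl hom_rules)+
  also have "\<dots> = \<pi>\<^sub>1 (A \<odot> B) D"
    unfolding \<pi>\<^sub>1_def runit_tensor[OF A B] ..
  finally show ?thesis .
qed

lemma proj1_assoc:
  assumes A [hom_rules]: "A \<in> Ob" and B [hom_rules]: "B \<in> Ob" and D [hom_rules]: "D \<in> Ob"
  shows "\<pi>\<^sub>1 A (B \<odot> D) \<cdot> \<alpha> A B D = \<pi>\<^sub>1 A B \<cdot> \<pi>\<^sub>1 (A \<odot> B) D"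
proof -
  have "\<pi>\<^sub>1 A (B \<odot> D) = \<pi>\<^sub>1 A B \<cdot> (\<one> A \<otimes> \<pi>\<^sub>1 B D)"
    using proj1_natural[OF id_hom[OF A] proj1_hom[OF B D]] id_left[OF proj1_hom[OF A tensor_ob[OF B D]]]
    by simp
  then have "\<pi>\<^sub>1 A (B \<odot> D) \<cdot> \<alpha> A B D = \<pi>\<^sub>1 A B \<cdot> (\<one> A \<otimes> \<pi>\<^sub>1 B D) \<cdot> \<alpha> A B D"
    by (rule eq_comp_precomp) (rule hom_rules)+
  then show ?thesis using id_tensor_proj1_assoc[OF A B D] by simp
qed

lemma proj2_assoc:
  assumes A [hom_rules]: "A \<in> Ob" and B [hom_rules]: "B \<in> Ob" and D [hom_rules]: "D \<in> Ob"
  shows "\<pi>\<^sub>2 A (B \<odot> D) \<cdot> \<alpha> A B D = \<pi>\<^sub>2 A B \<otimes> \<one> D"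
proof -
  have "\<pi>\<^sub>2 A (B \<odot> D) \<cdot> \<alpha> A B D = \<l> (B \<odot> D) \<cdot> (\<epsilon> A \<otimes> (\<one> B \<otimes> \<one> D)) \<cdot> \<alpha> A B D"
    unfolding \<pi>\<^sub>2_def tensor_id[OF B D] by (subst comp_assoc) (rule refl hom_rules)+
  also have "\<dots> = \<l> (B \<odot> D) \<cdot> \<alpha> I B D \<cdot> ((\<epsilon> A \<otimes> \<one> B) \<otimes> \<one> D)"
    by (subst assoc_natural[symmetric]) (rule refl hom_rules)+
  also have "\<dots> = (\<l> B \<otimes> \<one> D) \<cdot> ((\<epsilon> A \<otimes> \<one> B) \<otimes> \<one> D)"
    by (subst comp_eq_precomp[OF lunit_tensor]) (rule refl hom_rules)+
  also have "\<dots> = \<pi>\<^sub>2 A B \<otimes> \<one> D"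
    unfolding \<pi>\<^sub>2_def by (subst tensor_comp, (rule hom_rules)+) (simp add: id_left[OF id_hom[OF D]])
  finally show ?thesis .
qed

lemma id_tensor_proj2_assoc:
  assumes A [hom_rules]: "A \<in> Ob" and B [hom_rules]: "B \<in> Ob" and D [hom_rules]: "D \<in> Ob"
  shows "(\<one> A \<otimes> \<pi>\<^sub>2 B D) \<cdot> \<alpha> A B D = \<pi>\<^sub>1 A B \<otimes> \<one> D"
proof -
  have "(\<one> A \<otimes> \<pi>\<^sub>2 B D) \<cdot> \<alpha> A B D = (\<one> A \<otimes> \<l> D) \<cdot> (\<one> A \<otimes> (\<epsilon> B \<otimes> \<one> D)) \<cdot> \<alpha> A B D"
    unfolding \<pi>\<^sub>2_def by (subst eq_comp_precomp[OF id_tensor_comp]) (rule refl hom_rules)+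
  also have "\<dots> = (\<one> A \<otimes> \<l> D) \<cdot> \<alpha> A I D \<cdot> ((\<one> A \<otimes> \<epsilon> B) \<otimes> \<one> D)"
    by (subst assoc_natural[symmetric]) (rule refl hom_rules)+
  also have "\<dots> = (\<r> A \<otimes> \<one> D) \<cdot> ((\<one> A \<otimes> \<epsilon> B) \<otimes> \<one> D)"
    by (subst comp_eq_precomp[OF triangle]) (rule refl hom_rules)+
  also have "\<dots> = \<pi>\<^sub>1 A B \<otimes> \<one> D"
    unfolding \<pi>\<^sub>1_def by (subst tensor_comp, (rule hom_rules)+) (simp add: id_left[OF id_hom[OF D]])
  finally show ?thesis .
qed

lemma proj1_assoc_inv:
  assumes A [hom_rules]: "A \<in> Ob" and B [hom_rules]: "B \<in> Ob" and D [hom_rules]: "D \<in> Ob"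
  shows "\<pi>\<^sub>1 (A \<odot> B) D \<cdot> \<alpha>' A B D = \<one> A \<otimes> \<pi>\<^sub>1 B D"
  by (rule comp_assoc_inv[OF _ A B D id_tensor_proj1_assoc[OF A B D]]) (rule hom_rules)+

lemma proj1_tensor_id_assoc_inv:
  assumes A [hom_rules]: "A \<in> Ob" and B [hom_rules]: "B \<in> Ob" and D [hom_rules]: "D \<in> Ob"
  shows "(\<pi>\<^sub>1 A B \<otimes> \<one> D) \<cdot> \<alpha>' A B D = \<one> A \<otimes> \<pi>\<^sub>2 B D"
  by (rule comp_assoc_inv[OF _ A B D id_tensor_proj2_assoc[OF A B D]]) (rule hom_rules)+

lemma proj2_assoc_inv:
  assumes A [hom_rules]: "A \<in> Ob" and B [hom_rules]: "B \<in> Ob" and D [hom_rules]: "D \<in> Ob"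
  shows "\<pi>\<^sub>2 (A \<odot> B) D \<cdot> \<alpha>' A B D = \<pi>\<^sub>2 B D \<cdot> \<pi>\<^sub>2 A (B \<odot> D)"
proof (rule comp_assoc_inv[OF _ A B D])
  have "(\<pi>\<^sub>2 B D \<cdot> \<pi>\<^sub>2 A (B \<odot> D)) \<cdot> \<alpha> A B D = \<pi>\<^sub>2 B D \<cdot> (\<pi>\<^sub>2 A B \<otimes> \<one> D)"
    by (subst comp_assoc, (rule hom_rules)+) (simp add: proj2_assoc[OF A B D])
  also have "\<dots> = \<pi>\<^sub>2 (A \<odot> B) D"
    using proj2_natural[OF proj2_hom[OF A B] id_hom[OF D]] id_left[OF proj2_hom[OF tensor_ob[OF A B] D]] by simp
  finally show "(\<pi>\<^sub>2 B D \<cdot> \<pi>\<^sub>2 A (B \<odot> D)) \<cdot> \<alpha> A B D = \<pi>\<^sub>2 (A \<odot> B) D" .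
qed (rule hom_rules)+

lemma mid_swap_unfold:
  "mid_swap C X Y = \<alpha>' X Y (X \<odot> Y) \<cdot> (\<one> X \<otimes> (\<alpha> Y X Y \<cdot> (\<sigma> X Y \<otimes> \<one> Y) \<cdot> \<alpha>' X Y Y)) \<cdot> \<alpha> X X (Y \<odot> Y)"
  by (simp add: mid_swap_def \<alpha>'_def)

lemma mid_swap_hom [hom_rules]:
  "X \<in> Ob \<Longrightarrow> Y \<in> Ob \<Longrightarrow> mid_swap C X Y \<in> Hom ((X \<odot> X) \<odot> (Y \<odot> Y)) ((X \<odot> Y) \<odot> (X \<odot> Y))"
  unfolding mid_swap_unfold by (rule hom_rules | assumption)+

lemma proj1_swap_middle:
  assumes X [hom_rules]: "X \<in> Ob" and Y [hom_rules]: "Y \<in> Ob"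
  shows "\<pi>\<^sub>1 Y (X \<odot> Y) \<cdot> \<alpha> Y X Y \<cdot> (\<sigma> X Y \<otimes> \<one> Y) \<cdot> \<alpha>' X Y Y = \<pi>\<^sub>1 Y Y \<cdot> \<pi>\<^sub>2 X (Y \<odot> Y)"
proof -
  have "\<pi>\<^sub>1 Y (X \<odot> Y) \<cdot> \<alpha> Y X Y \<cdot> (\<sigma> X Y \<otimes> \<one> Y) \<cdot> \<alpha>' X Y Y
      = \<pi>\<^sub>1 Y X \<cdot> \<pi>\<^sub>1 (Y \<odot> X) Y \<cdot> (\<sigma> X Y \<otimes> \<one> Y) \<cdot> \<alpha>' X Y Y"
    by (subst comp_eq_comp_precomp[OF proj1_assoc]) (rule refl hom_rules)+
  also have "\<dots> = \<pi>\<^sub>1 Y X \<cdot> \<sigma> X Y \<cdot> \<pi>\<^sub>1 (X \<odot> Y) Y \<cdot> \<alpha>' X Y Y"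
    by (subst comp_eq_comp_precomp[OF proj1_natural]) (rule refl hom_rules)+
  also have "\<dots> = \<pi>\<^sub>2 X Y \<cdot> (\<one> X \<otimes> \<pi>\<^sub>1 Y Y)"
    by (subst comp_eq_precomp[OF proj1_swap], (rule hom_rules)+) (simp add: proj1_assoc_inv[OF X Y Y])
  also have "\<dots> = \<pi>\<^sub>1 Y Y \<cdot> \<pi>\<^sub>2 X (Y \<odot> Y)"
    by (rule proj2_natural) (rule hom_rules)+
  finally show ?thesis .
qed

lemma proj2_swap_middle:
  assumes X [hom_rules]: "X \<in> Ob" and Y [hom_rules]: "Y \<in> Ob"
  shows "\<pi>\<^sub>2 Y (X \<odot> Y) \<cdot> \<alpha> Y X Y \<cdot> (\<sigma> X Y \<otimes> \<one> Y) \<cdot> \<alpha>' X Y Y = \<one> X \<otimes> \<pi>\<^sub>2 Y Y"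
proof -
  have "\<pi>\<^sub>2 Y (X \<odot> Y) \<cdot> \<alpha> Y X Y \<cdot> (\<sigma> X Y \<otimes> \<one> Y) \<cdot> \<alpha>' X Y Y
      = ((\<pi>\<^sub>2 Y X \<cdot> \<sigma> X Y) \<otimes> (\<one> Y \<cdot> \<one> Y)) \<cdot> \<alpha>' X Y Y"
    by (subst comp_eq_precomp[OF proj2_assoc], (rule hom_rules)+) (rule tensor_comp_precomp; (rule hom_rules)+)
  also have "\<dots> = \<one> X \<otimes> \<pi>\<^sub>2 Y Y"
    using proj2_swap[OF X Y] id_left[OF id_hom[OF Y]] proj1_tensor_id_assoc_inv[OF X Y Y] by simp
  finally show ?thesis .
qed

lemma proj1_mid_swap:
  assumes X [hom_rules]: "X \<in> Ob" and Y [hom_rules]: "Y \<in> Ob"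
  shows "\<pi>\<^sub>1 (X \<odot> Y) (X \<odot> Y) \<cdot> mid_swap C X Y = \<pi>\<^sub>1 X X \<otimes> \<pi>\<^sub>1 Y Y"
proof -
  have "\<pi>\<^sub>1 (X \<odot> Y) (X \<odot> Y) \<cdot> mid_swap C X Y
      = (\<one> X \<otimes> \<pi>\<^sub>1 Y (X \<odot> Y)) \<cdot> (\<one> X \<otimes> (\<alpha> Y X Y \<cdot> (\<sigma> X Y \<otimes> \<one> Y) \<cdot> \<alpha>' X Y Y)) \<cdot> \<alpha> X X (Y \<odot> Y)"
    unfolding mid_swap_unfold by (subst comp_eq_precomp[OF proj1_assoc_inv]) (rule refl hom_rules)+
  also have "\<dots> = (\<one> X \<otimes> (\<pi>\<^sub>1 Y Y \<cdot> \<pi>\<^sub>2 X (Y \<odot> Y))) \<cdot> \<alpha> X X (Y \<odot> Y)"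
    unfolding proj1_swap_middle[OF X Y, symmetric]
    by (subst comp_eq_precomp[OF id_tensor_comp[symmetric]]) (rule refl hom_rules)+
  also have "\<dots> = (\<one> X \<otimes> \<pi>\<^sub>1 Y Y) \<cdot> (\<pi>\<^sub>1 X X \<otimes> \<one> (Y \<odot> Y))"
    by (subst eq_comp_precomp[OF id_tensor_comp], (rule hom_rules)+) (simp add: id_tensor_proj2_assoc[OF X X tensor_ob[OF Y Y]])
  also have "\<dots> = \<pi>\<^sub>1 X X \<otimes> \<pi>\<^sub>1 Y Y"
    by (subst tensor_comp, (rule hom_rules)+) (simp add: id_left[OF proj1_hom[OF X X]] id_right[OF proj1_hom[OF Y Y]])
  finally show ?thesis .
qed

lemma proj2_mid_swap:
  assumes X [hom_rules]: "X \<in> Ob" and Y [hom_rules]: "Y \<in> Ob"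
  shows "\<pi>\<^sub>2 (X \<odot> Y) (X \<odot> Y) \<cdot> mid_swap C X Y = \<pi>\<^sub>2 X X \<otimes> \<pi>\<^sub>2 Y Y"
proof -
  have "\<pi>\<^sub>2 (X \<odot> Y) (X \<odot> Y) \<cdot> mid_swap C X Y
      = \<pi>\<^sub>2 Y (X \<odot> Y) \<cdot> (\<alpha> Y X Y \<cdot> (\<sigma> X Y \<otimes> \<one> Y) \<cdot> \<alpha>' X Y Y) \<cdot> \<pi>\<^sub>2 X (X \<odot> (Y \<odot> Y)) \<cdot> \<alpha> X X (Y \<odot> Y)"
    unfolding mid_swap_unfold
    by (subst comp_eq_comp_precomp[OF proj2_assoc_inv], (rule hom_rules)+)
      (subst comp_eq_comp_precomp[OF proj2_natural], (rule refl hom_rules)+)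
  also have "\<dots> = (\<pi>\<^sub>2 Y (X \<odot> Y) \<cdot> \<alpha> Y X Y \<cdot> (\<sigma> X Y \<otimes> \<one> Y) \<cdot> \<alpha>' X Y Y) \<cdot> (\<pi>\<^sub>2 X X \<otimes> \<one> (Y \<odot> Y))"
    unfolding proj2_assoc[OF X X tensor_ob[OF Y Y]] by (subst comp_assoc) (rule refl hom_rules)+
  also have "\<dots> = \<pi>\<^sub>2 X X \<otimes> \<pi>\<^sub>2 Y Y"
    unfolding proj2_swap_middle[OF X Y]
    by (subst tensor_comp, (rule hom_rules)+) (simp add: id_left[OF proj2_hom[OF X X]] id_right[OF proj2_hom[OF Y Y]])
  finally show ?thesis .
qed

section \<open>Counital maps and initial dilations\<close>

lemma dilation_iff:
  assumes "X \<in> Ob"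
  shows "dilation C p A X E \<pi> \<longleftrightarrow> E \<in> Ob \<and> \<pi> \<in> Hom A (X \<odot> E) \<and> \<pi>\<^sub>1 X E \<cdot> \<pi> = p"
  unfolding dilation_def using proj1_comp[OF assms] by auto

lemma marginal_eq: "X \<in> Ob \<Longrightarrow> E \<in> Ob \<Longrightarrow> \<iota> \<in> Hom A (X \<odot> E) \<Longrightarrow> marginal C X E \<iota> = \<pi>\<^sub>2 X E \<cdot> \<iota>"
  unfolding marginal_def by (rule proj2_comp)

definition counital where
  "counital X c \<longleftrightarrow> c \<in> Hom X (X \<odot> X) \<and> \<pi>\<^sub>1 X X \<cdot> c = \<one> X \<and> \<pi>\<^sub>2 X X \<cdot> c = \<one> X"

definition initial_counital where
  "initial_counital X c \<longleftrightarrow> counital X c \<and> initial_dilation C (\<one> X) X X X c"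

lemma counital_ob: "counital X c \<Longrightarrow> X \<in> Ob"
  unfolding counital_def using hom_obs by blast

lemma counital_iff_dilation:
  "X \<in> Ob \<Longrightarrow> counital X c \<longleftrightarrow> dilation C (\<one> X) X X X c \<and> marginal C X X c = \<one> X"
  unfolding counital_def dilation_iff using marginal_eq by auto

lemma proj2_id_tensor_counital:
  assumes c: "counital X c" and h [hom_rules]: "h \<in> Hom X Y"
  shows "\<pi>\<^sub>2 X Y \<cdot> (\<one> X \<otimes> h) \<cdot> c = h"
proof -
  have [hom_rules]: "X \<in> Ob" "Y \<in> Ob" "c \<in> Hom X (X \<odot> X)"
    using hom_obs h c unfolding counital_def by auto
  have "\<pi>\<^sub>2 X Y \<cdot> (\<one> X \<otimes> h) \<cdot> c = h \<cdot> \<pi>\<^sub>2 X X \<cdot> c"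
    by (subst comp_eq_comp_precomp[OF proj2_natural]) (rule refl hom_rules)+
  then show ?thesis using c id_right[OF h] unfolding counital_def by simp
qed

lemma initial_counital_unique:
  assumes c: "initial_counital X c" and c': "counital X c'"
  shows "c' = c"
proof -
  have X: "X \<in> Ob" and c_hom: "c \<in> Hom X (X \<odot> X)"
    using c counital_ob unfolding initial_counital_def counital_def by auto
  have "dilation C (\<one> X) X X X c'" using c' counital_iff_dilation[OF X] by blast
  then obtain f where f: "f \<in> Hom X X" and c'_eq: "(\<one> X \<otimes> f) \<cdot> c = c'"
    using c unfolding initial_counital_def initial_dilation_def by blast
  have "f = \<one> X"
    using proj2_id_tensor_counital[OF _ f] c c' c'_eq unfolding initial_counital_def counital_def by auto
  then show ?thesis using c'_eq tensor_id[OF X X] id_left[OF c_hom] by simp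
qed

lemma counital_swap:
  assumes "counital X c"
  shows "counital X (\<sigma> X X \<cdot> c)"
proof -
  have [hom_rules]: "X \<in> Ob" "c \<in> Hom X (X \<odot> X)" using assms counital_ob unfolding counital_def by auto
  have "\<pi>\<^sub>1 X X \<cdot> \<sigma> X X \<cdot> c = \<pi>\<^sub>2 X X \<cdot> c" "\<pi>\<^sub>2 X X \<cdot> \<sigma> X X \<cdot> c = \<pi>\<^sub>1 X X \<cdot> c"
    by (rule comp_eq_precomp[OF proj1_swap] comp_eq_precomp[OF proj2_swap], (rule hom_rules)+)+
  then show ?thesis using assms unfolding counital_def by (auto intro: hom_rules)
qed

lemma initial_counital_coassoc:
  assumes c: "initial_counital X c"
  shows "\<alpha> X X X \<cdot> (c \<otimes> \<one> X) \<cdot> c = (\<one> X \<otimes> c) \<cdot> c"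
proof -
  have X [hom_rules]: "X \<in> Ob" and c_hom [hom_rules]: "c \<in> Hom X (X \<odot> X)"
    and counit: "\<pi>\<^sub>1 X X \<cdot> c = \<one> X" "\<pi>\<^sub>2 X X \<cdot> c = \<one> X"
    using c counital_ob unfolding initial_counital_def counital_def by auto
  let ?u = "\<alpha> X X X \<cdot> (c \<otimes> \<one> X) \<cdot> c"
  have "\<pi>\<^sub>1 X (X \<odot> X) \<cdot> ?u = \<pi>\<^sub>1 X X \<cdot> c \<cdot> \<pi>\<^sub>1 X X \<cdot> c"
    by (subst comp_eq_comp_precomp[OF proj1_assoc], (rule hom_rules)+)
      (subst comp_eq_comp_precomp[OF proj1_natural], (rule refl hom_rules)+)
  moreover have "?u \<in> Hom X (X \<odot> (X \<odot> X))" by (rule hom_rules)+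
  ultimately have "dilation C (\<one> X) X X (X \<odot> X) ?u"
    unfolding dilation_iff[OF X] using counit id_right[OF c_hom] tensor_ob[OF X X] by simp
  then obtain f where f: "f \<in> Hom X (X \<odot> X)" and u_eq: "(\<one> X \<otimes> f) \<cdot> c = ?u"
    using c unfolding initial_counital_def initial_dilation_def by blast
  have "f = \<pi>\<^sub>2 X (X \<odot> X) \<cdot> ?u"
    using proj2_id_tensor_counital[OF _ f] c u_eq unfolding initial_counital_def by metis
  also have "\<dots> = ((\<pi>\<^sub>2 X X \<cdot> c) \<otimes> (\<one> X \<cdot> \<one> X)) \<cdot> c"
    by (subst comp_eq_precomp[OF proj2_assoc], (rule hom_rules)+) (rule tensor_comp_precomp; (rule hom_rules)+)
  also have "\<dots> = c" using counit id_left[OF id_hom[OF X]] tensor_id[OF X X] id_left[OF c_hom] by simp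
  finally show ?thesis using u_eq by simp
qed

lemma counital_tensor:
  assumes cX: "counital X cX" and cY: "counital Y cY"
  shows "counital (X \<odot> Y) (mid_swap C X Y \<cdot> (cX \<otimes> cY))"
proof -
  have [hom_rules]: "X \<in> Ob" "Y \<in> Ob" "cX \<in> Hom X (X \<odot> X)" "cY \<in> Hom Y (Y \<odot> Y)"
    using cX cY counital_ob unfolding counital_def by auto
  have "\<pi>\<^sub>1 (X \<odot> Y) (X \<odot> Y) \<cdot> mid_swap C X Y \<cdot> (cX \<otimes> cY) = (\<pi>\<^sub>1 X X \<cdot> cX) \<otimes> (\<pi>\<^sub>1 Y Y \<cdot> cY)"
    "\<pi>\<^sub>2 (X \<odot> Y) (X \<odot> Y) \<cdot> mid_swap C X Y \<cdot> (cX \<otimes> cY) = (\<pi>\<^sub>2 X X \<cdot> cX) \<otimes> (\<pi>\<^sub>2 Y Y \<cdot> cY)"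
    by (subst comp_eq_precomp[OF proj1_mid_swap] comp_eq_precomp[OF proj2_mid_swap], (rule hom_rules)+;
        rule tensor_comp; (rule hom_rules)+)+
  then show ?thesis using cX cY tensor_id unfolding counital_def by (auto intro: hom_rules)
qed

lemma markov_iff_initial_counital:
  "markov C copy \<and> (\<forall>X \<in> Ob. initial_dilation C (\<one> X) X X X (copy X)) \<longleftrightarrow>
   (\<forall>X \<in> Ob. initial_counital X (copy X))"
proof
  assume M: "markov C copy \<and> (\<forall>X \<in> Ob. initial_dilation C (\<one> X) X X X (copy X))"
  show "\<forall>X \<in> Ob. initial_counital X (copy X)"
  proof
    fix X assume X: "X \<in> Ob"
    have "copy X \<in> Hom X (X \<odot> X)" "\<l> X \<cdot> (\<epsilon> X \<otimes> \<one> X) \<cdot> copy X = \<one> X"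
      "\<r> X \<cdot> (\<one> X \<otimes> \<epsilon> X) \<cdot> copy X = \<one> X"
      using M X unfolding markov_def by auto
    then show "initial_counital X (copy X)"
      using M X proj1_comp[OF X X] proj2_comp[OF X X] unfolding initial_counital_def counital_def by auto
  qed
next
  assume I: "\<forall>X \<in> Ob. initial_counital X (copy X)"
  then have counital: "counital X (copy X)" if "X \<in> Ob" for X
    using that unfolding initial_counital_def by blast
  have "markov C copy"
    unfolding markov_def
  proof (intro conjI ballI)
    show "semicartesian C" by (rule semicartesian)
    fix X assume X: "X \<in> Ob"
    then show "copy X \<in> Hom X (X \<odot> X)" "\<l> X \<cdot> (\<epsilon> X \<otimes> \<one> X) \<cdot> copy X = \<one> X"
      "\<r> X \<cdot> (\<one> X \<otimes> \<epsilon> X) \<cdot> copy X = \<one> X"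
      using counital[OF X] proj1_comp proj2_comp unfolding counital_def by auto
    show "\<alpha> X X X \<cdot> (copy X \<otimes> \<one> X) \<cdot> copy X = (\<one> X \<otimes> copy X) \<cdot> copy X"
      using I X by (blast intro: initial_counital_coassoc)
    show "\<sigma> X X \<cdot> copy X = copy X"
      using I X counital_swap[OF counital[OF X]] initial_counital_unique by blast
  next
    fix X Y assume "X \<in> Ob" "Y \<in> Ob"
    then show "copy (X \<odot> Y) = mid_swap C X Y \<cdot> (copy X \<otimes> copy Y)"
      using I counital_tensor counital initial_counital_unique tensor_ob by metis
  qed
  then show "markov C copy \<and> (\<forall>X \<in> Ob. initial_dilation C (\<one> X) X X X (copy X))"
    using I unfolding initial_counital_def by blast
qed

lemma dilation_postcomp:
  assumes \<rho>: "dilation C \<pi> A Y F \<rho>" and g [hom_rules]: "g \<in> Hom Y Y'"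
  shows "dilation C (g \<cdot> \<pi>) A Y' F ((g \<otimes> \<one> F) \<cdot> \<rho>)"
proof -
  have Y [hom_rules]: "Y \<in> Ob" and Y' [hom_rules]: "Y' \<in> Ob" using hom_obs g by auto
  have [hom_rules]: "F \<in> Ob" "\<rho> \<in> Hom A (Y \<odot> F)" and proj: "\<pi>\<^sub>1 Y F \<cdot> \<rho> = \<pi>"
    using \<rho> dilation_iff[OF Y] by auto
  have "\<pi>\<^sub>1 Y' F \<cdot> (g \<otimes> \<one> F) \<cdot> \<rho> = g \<cdot> \<pi>\<^sub>1 Y F \<cdot> \<rho>"
    by (subst comp_eq_comp_precomp[OF proj1_natural]) (rule refl hom_rules)+
  moreover have "(g \<otimes> \<one> F) \<cdot> \<rho> \<in> Hom A (Y' \<odot> F)" by (rule hom_rules)+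
  ultimately show ?thesis unfolding dilation_iff[OF Y'] using proj \<open>F \<in> Ob\<close> by simp
qed

lemma dil_equal_retract:
  assumes eq: "dil_equal C \<iota> A X E (h\<^sub>1 \<cdot> f) (h\<^sub>2 \<cdot> f)" and X [hom_rules]: "X \<in> Ob"
    and c [hom_rules]: "c \<in> Hom A (X \<odot> E')" and m [hom_rules]: "m \<in> Hom E' E"
    and f [hom_rules]: "f \<in> Hom E E'" and fm: "f \<cdot> m = \<one> E'" and \<iota>: "\<iota> = (\<one> X \<otimes> m) \<cdot> c"
    and h [hom_rules]: "h\<^sub>1 \<in> Hom E' E''" "h\<^sub>2 \<in> Hom E' E''"
  shows "dil_equal C c A X E' h\<^sub>1 h\<^sub>2"
  unfolding dil_equal_def
proof (intro allI impI)
  fix F \<rho> assume \<rho>: "dilation C c A (X \<odot> E') F \<rho>"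
  have [hom_rules]: "E \<in> Ob" "E' \<in> Ob" "E'' \<in> Ob" using hom_obs m h by auto
  have F [hom_rules]: "F \<in> Ob" and [hom_rules]: "\<rho> \<in> Hom A ((X \<odot> E') \<odot> F)"
    using \<rho> unfolding dilation_def by auto
  have "dilation C \<iota> A (X \<odot> E) F (((\<one> X \<otimes> m) \<otimes> \<one> F) \<cdot> \<rho>)"
    unfolding \<iota> by (rule dilation_postcomp[OF \<rho>]) (rule hom_rules)+
  then have "((\<one> X \<otimes> (h\<^sub>1 \<cdot> f)) \<otimes> \<one> F) \<cdot> ((\<one> X \<otimes> m) \<otimes> \<one> F) \<cdot> \<rho> =
      ((\<one> X \<otimes> (h\<^sub>2 \<cdot> f)) \<otimes> \<one> F) \<cdot> ((\<one> X \<otimes> m) \<otimes> \<one> F) \<cdot> \<rho>"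
    using eq unfolding dil_equal_def by blast
  moreover have "((\<one> X \<otimes> (h \<cdot> f)) \<otimes> \<one> F) \<cdot> ((\<one> X \<otimes> m) \<otimes> \<one> F) \<cdot> \<rho> = ((\<one> X \<otimes> h) \<otimes> \<one> F) \<cdot> \<rho>"
    if [hom_rules]: "h \<in> Hom E' E''" for h
  proof -
    have hfm: "(\<one> X \<otimes> (h \<cdot> f)) \<cdot> (\<one> X \<otimes> m) = \<one> X \<otimes> (h \<cdot> f \<cdot> m)"
      by (subst tensor_comp, (rule hom_rules)+) (subst comp_assoc, (rule refl hom_rules)+,
          simp add: id_left[OF id_hom[OF X]])
    show ?thesis
      by (subst tensor_comp_precomp, (rule hom_rules)+)
        (simp add: hfm fm id_right[OF that] id_left[OF id_hom[OF F]])
  qed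
  ultimately show "((\<one> X \<otimes> h\<^sub>1) \<otimes> \<one> F) \<cdot> \<rho> = ((\<one> X \<otimes> h\<^sub>2) \<otimes> \<one> F) \<cdot> \<rho>"
    using h by simp
qed

lemma initial_dilation_retract:
  assumes init: "initial_dilation C p A X E \<iota>" and X [hom_rules]: "X \<in> Ob"
    and c [hom_rules]: "c \<in> Hom A (X \<odot> E')" and m [hom_rules]: "m \<in> Hom E' E"
    and f [hom_rules]: "f \<in> Hom E E'" and fm: "f \<cdot> m = \<one> E'" and \<iota>: "\<iota> = (\<one> X \<otimes> m) \<cdot> c"
  shows "initial_dilation C p A X E' c"
  unfolding initial_dilation_def
proof (intro conjI allI impI ballI)
  have [hom_rules]: "E \<in> Ob" "E' \<in> Ob" using hom_obs m by auto
  have "\<pi>\<^sub>1 X E \<cdot> \<iota> = \<pi>\<^sub>1 X E' \<cdot> c"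
    unfolding \<iota> by (subst comp_eq_comp_precomp[OF proj1_natural], (rule hom_rules)+) (rule id_left, (rule hom_rules)+)
  then show "dilation C p A X E' c"
    using init unfolding initial_dilation_def dilation_iff[OF X] by (auto intro: hom_rules)
  fix E'' \<pi>' assume \<pi>': "dilation C p A X E'' \<pi>'"
  then obtain g where g [hom_rules]: "g \<in> Hom E E''" and g\<pi>: "(\<one> X \<otimes> g) \<cdot> \<iota> = \<pi>'"
    using init unfolding initial_dilation_def by blast
  have "(\<one> X \<otimes> (g \<cdot> m)) \<cdot> c = \<pi>'"
    using g\<pi> unfolding \<iota> by (subst eq_comp_precomp[OF id_tensor_comp]) (rule refl hom_rules)+
  then show "\<exists>h \<in> Hom E' E''. (\<one> X \<otimes> h) \<cdot> c = \<pi>'" by (blast intro: hom_rules)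
  fix h\<^sub>1 h\<^sub>2 assume h [hom_rules]: "h\<^sub>1 \<in> Hom E' E''" "h\<^sub>2 \<in> Hom E' E''"
    and eq: "(\<one> X \<otimes> h\<^sub>1) \<cdot> c = \<pi>'" "(\<one> X \<otimes> h\<^sub>2) \<cdot> c = \<pi>'"
  have [hom_rules]: "\<iota> \<in> Hom A (X \<odot> E)" unfolding \<iota> by (rule hom_rules)+
  have f\<iota>: "(\<one> X \<otimes> f) \<cdot> \<iota> = c"
    unfolding \<iota> by (subst comp_eq_precomp[OF id_tensor_comp[symmetric]], (rule hom_rules)+)
      (simp add: fm tensor_id id_left[OF c] hom_rules)
  have hf: "(\<one> X \<otimes> (h \<cdot> f)) \<cdot> \<iota> = (\<one> X \<otimes> h) \<cdot> c" if [hom_rules]: "h \<in> Hom E' E''" for h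
    by (subst eq_comp_precomp[OF id_tensor_comp], (rule hom_rules)+) (simp add: f\<iota>)
  have "h\<^sub>1 \<cdot> f \<in> Hom E E''" "h\<^sub>2 \<cdot> f \<in> Hom E E''"
    "(\<one> X \<otimes> (h\<^sub>1 \<cdot> f)) \<cdot> \<iota> = \<pi>'" "(\<one> X \<otimes> (h\<^sub>2 \<cdot> f)) \<cdot> \<iota> = \<pi>'"
    using hf[OF h(1)] hf[OF h(2)] eq by (simp_all add: comp_hom[OF f h(1)] comp_hom[OF f h(2)])
  then have "dil_equal C \<iota> A X E (h\<^sub>1 \<cdot> f) (h\<^sub>2 \<cdot> f)"
    using init \<pi>' unfolding initial_dilation_def by blast
  then show "dil_equal C c A X E' h\<^sub>1 h\<^sub>2"
    by (rule dil_equal_retract[OF _ X c m f fm \<iota> h])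
qed

lemma counital_of_noncreative_marginal:
  assumes X [hom_rules]: "X \<in> Ob" and \<iota>: "dilation C (\<one> X) X X E \<iota>"
    and nc: "non_creative C (marginal C X E \<iota>) X E"
  obtains c where "counital X c" and "\<iota> = (\<one> X \<otimes> marginal C X E \<iota>) \<cdot> c"
proof -
  have E [hom_rules]: "E \<in> Ob" and \<iota>_hom [hom_rules]: "\<iota> \<in> Hom X (X \<odot> E)" and \<iota>_proj1: "\<pi>\<^sub>1 X E \<cdot> \<iota> = \<one> X"
    using \<iota> dilation_iff[OF X] by auto
  define m where "m = marginal C X E \<iota>"
  have m_eq: "m = \<pi>\<^sub>2 X E \<cdot> \<iota>" unfolding m_def by (rule marginal_eq) (rule hom_rules)+
  have [hom_rules]: "m \<in> Hom X E" unfolding m_eq by (rule hom_rules)+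
  have "\<pi>\<^sub>1 E X \<cdot> \<sigma> X E \<cdot> \<iota> = m"
    unfolding m_eq by (rule comp_eq_precomp[OF proj1_swap]) (rule hom_rules)+
  then have "dilation C m X E X (\<sigma> X E \<cdot> \<iota>)"
    unfolding dilation_iff[OF E] by (blast intro: hom_rules)
  then obtain \<kappa> where \<kappa>: "dilation C (\<one> X) X X X \<kappa>" and \<sigma>\<iota>: "\<sigma> X E \<cdot> \<iota> = (m \<otimes> \<one> X) \<cdot> \<kappa>"
    using nc unfolding non_creative_def m_def by blast
  have [hom_rules]: "\<kappa> \<in> Hom X (X \<odot> X)" and \<kappa>_proj1: "\<pi>\<^sub>1 X X \<cdot> \<kappa> = \<one> X"
    using \<kappa> dilation_iff[OF X] by auto
  have \<iota>_eq: "\<iota> = (\<one> X \<otimes> m) \<cdot> \<sigma> X X \<cdot> \<kappa>"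
  proof -
    have "\<iota> = (\<sigma> E X \<cdot> \<sigma> X E) \<cdot> \<iota>" using swap_swap[OF X E] id_left[OF \<iota>_hom] by simp
    also have "\<dots> = \<sigma> E X \<cdot> (m \<otimes> \<one> X) \<cdot> \<kappa>" by (subst comp_assoc, (rule hom_rules)+) (simp add: \<sigma>\<iota>)
    also have "\<dots> = (\<one> X \<otimes> m) \<cdot> \<sigma> X X \<cdot> \<kappa>"
      by (subst comp_eq_comp_precomp[OF swap_natural]) (rule refl hom_rules)+
    finally show ?thesis .
  qed
  have "\<pi>\<^sub>1 X X \<cdot> \<sigma> X X \<cdot> \<kappa> = \<pi>\<^sub>1 X E \<cdot> \<iota>"
    unfolding \<iota>_eq by (subst comp_eq_comp_precomp[OF proj1_natural], (rule hom_rules)+)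
      (rule id_left[symmetric], (rule hom_rules)+)
  moreover have "\<pi>\<^sub>2 X X \<cdot> \<sigma> X X \<cdot> \<kappa> = \<pi>\<^sub>1 X X \<cdot> \<kappa>"
    by (rule comp_eq_precomp[OF proj2_swap]) (rule hom_rules)+
  ultimately have "counital X (\<sigma> X X \<cdot> \<kappa>)"
    unfolding counital_def using \<iota>_proj1 \<kappa>_proj1 by (auto intro: hom_rules)
  then show thesis using that \<iota>_eq unfolding m_def by blast
qed

lemma initial_counital_of_noncreative_marginal:
  assumes X [hom_rules]: "X \<in> Ob" and init: "initial_dilation C (\<one> X) X X E \<iota>"
    and nc: "non_creative C (marginal C X E \<iota>) X E"
  shows "\<exists>c. initial_counital X c"
proof -
  have \<iota>: "dilation C (\<one> X) X X E \<iota>" using init unfolding initial_dilation_def by blast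
  then have E [hom_rules]: "E \<in> Ob" and \<iota>_hom [hom_rules]: "\<iota> \<in> Hom X (X \<odot> E)"
    using dilation_iff[OF X] by auto
  define m where "m = marginal C X E \<iota>"
  have m [hom_rules]: "m \<in> Hom X E" unfolding m_def marginal_eq[OF X E \<iota>_hom] by (rule hom_rules)+
  obtain c where c: "counital X c" and \<iota>_eq: "\<iota> = (\<one> X \<otimes> m) \<cdot> c"
    using counital_of_noncreative_marginal[OF X \<iota> nc] unfolding m_def by blast
  have c_hom [hom_rules]: "c \<in> Hom X (X \<odot> X)" using c unfolding counital_def by blast
  have "dilation C (\<one> X) X X X c" using c counital_iff_dilation[OF X] by blast
  then obtain f where f [hom_rules]: "f \<in> Hom E X" and f\<iota>: "(\<one> X \<otimes> f) \<cdot> \<iota> = c"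
    using init unfolding initial_dilation_def by blast
  have "(\<one> X \<otimes> (f \<cdot> m)) \<cdot> c = (\<one> X \<otimes> f) \<cdot> \<iota>"
    unfolding \<iota>_eq by (subst eq_comp_precomp[OF id_tensor_comp]) (rule refl hom_rules)+
  then have "f \<cdot> m = \<one> X"
    using proj2_id_tensor_counital[OF c comp_hom[OF m f]] c f\<iota> unfolding counital_def by simp
  then have "initial_dilation C (\<one> X) X X X c"
    by (rule initial_dilation_retract[OF init X c_hom m f _ \<iota>_eq])
  then show ?thesis using c unfolding initial_counital_def by blast
qed

lemma non_creative_id: "A \<in> Ob \<Longrightarrow> non_creative C (\<one> A) A A"
  unfolding non_creative_def dilation_def
  using tensor_id id_left by (metis (no_types, lifting))

lemma ex_initial_counital_iff:
  assumes X: "X \<in> Ob"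
  shows "(\<exists>c. initial_counital X c) \<longleftrightarrow>
    (\<exists>E \<iota>. initial_dilation C (\<one> X) X X E \<iota> \<and> non_creative C (marginal C X E \<iota>) X E)"
proof
  assume "\<exists>c. initial_counital X c"
  then obtain c where c: "initial_counital X c" by blast
  then have "marginal C X X c = \<one> X"
    using counital_iff_dilation[OF X] unfolding initial_counital_def by blast
  then show "\<exists>E \<iota>. initial_dilation C (\<one> X) X X E \<iota> \<and> non_creative C (marginal C X E \<iota>) X E"
    using c non_creative_id[OF X] unfolding initial_counital_def by (intro exI[of _ X] exI[of _ c]) simp
qed (use initial_counital_of_noncreative_marginal[OF X] in blast)

lemma ex_markov_iff:
  "(\<exists>copy. markov C copy \<and> (\<forall>X \<in> Ob. initial_dilation C (\<one> X) X X X (copy X))) \<longleftrightarrow>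
   (\<forall>X \<in> Ob. \<exists>c. initial_counital X c)"
  using markov_iff_initial_counital by (metis (no_types))

end

theorem theorem4p19:
  fixes C :: "('o, 'm, 'z) smc_scheme"
  assumes "semicartesian C"
  shows "((\<exists>copy. markov C copy \<and>
              (\<forall>X \<in> obs C. initial_dilation C (idt C X) X X X (copy X)))
          \<longleftrightarrow>
          (\<forall>X \<in> obs C. \<exists>E \<iota>. initial_dilation C (idt C X) X X E \<iota> \<and>
              non_creative C (marginal C X E \<iota>) X E))
       \<and> (\<forall>copy1 copy2.
            markov C copy1 \<and> (\<forall>X \<in> obs C. initial_dilation C (idt C X) X X X (copy1 X)) \<and>
            markov C copy2 \<and> (\<forall>X \<in> obs C. initial_dilation C (idt C X) X X X (copy2 X))
            \<longrightarrow> (\<forall>X \<in> obs C. copy1 X = copy2 X))"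
proof -
  interpret semicartesian_cat C by unfold_locales (rule assms)
  show ?thesis
    using ex_markov_iff ex_initial_counital_iff markov_iff_initial_counital initial_counital_unique
    unfolding initial_counital_def by blast
qed

end
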